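(* Let $G=(V,E)$ be a DAG and $ij\in E$. If $A\subseteq V$ is identifying for the edge $ij$, i.e. $\lambda_{ij|A}(\phi_G(\Omega,\Lambda))=\lambda_{ij}$ for all parameters $(\Omega,\Lambda)$, then $i\in A\subseteq V\setminus\overline{\mathrm{de}}(j)$.
   Context: $G=(V,E)$ is a DAG, edges $i\to j$ written $ij$; $\mathrm{de}(j)$ descendants of $j$ (excluding $j$), $\overline{\mathrm{de}}(j)=\{j\}\cup\mathrm{de}(j)$. Parameters: $\Omega=\mathrm{diag}(\omega_i)$ with $\omega_i>0$, $\Lambda=(\lambda_{ij})$ with $\lambda_{ij}=0$ for $ij\notin E$. $\phi_G(\Omega,\Lambda)=(I-\Lambda)^{-T}\Omega(I-\Lambda)^{-1}$. $\Sigma_A$ principal submatrix; for $K\subseteq V$ and $i,j$, $\Sigma_{ij|K}$ the submatrix with rows $(i,K)$ and columns $(j,K)$ (if $j\in K$ it has a repeated column); $\lambda_{ij|A}(\Sigma)=|\Sigma_{ij|A\setminus\{i\}}|/|\Sigma_A|$. *)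

theory Defs
  imports "Jordan_Normal_Form.Gauss_Jordan_Elimination" "Jordan_Normal_Form.Determinant"
begin

definition is_dag :: "nat \<Rightarrow> (nat \<times> nat) set \<Rightarrow> bool" where
  "is_dag n E \<longleftrightarrow> E \<subseteq> {0..<n} \<times> {0..<n} \<and> acyclic E"

definition de :: "(nat \<times> nat) set \<Rightarrow> nat \<Rightarrow> nat set" where
  "de E j = {k. (j, k) \<in> E\<^sup>+}"

definition de_bar :: "(nat \<times> nat) set \<Rightarrow> nat \<Rightarrow> nat set" where
  "de_bar E j = insert j (de E j)"

text \<open>Parameters: Omega given by its diagonal, Lambda an n x n matrix supported on E.\<close>
definition is_param :: "nat \<Rightarrow> (nat \<times> nat) set \<Rightarrow> (nat \<Rightarrow> real) \<Rightarrow> real mat \<Rightarrow> bool" where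
  "is_param n E \<omega> \<Lambda> \<longleftrightarrow> (\<forall>i<n. \<omega> i > 0) \<and> \<Lambda> \<in> carrier_mat n n \<and>
     (\<forall>i<n. \<forall>j<n. (i, j) \<notin> E \<longrightarrow> \<Lambda> $$ (i, j) = 0)"

definition mat_inv :: "real mat \<Rightarrow> real mat" where
  "mat_inv A = the (mat_inverse A)"

definition phi :: "nat \<Rightarrow> (nat \<Rightarrow> real) \<Rightarrow> real mat \<Rightarrow> real mat" where
  "phi n \<omega> \<Lambda> = transpose_mat (mat_inv (1\<^sub>m n - \<Lambda>)) * mat n n (\<lambda>(i, j). if i = j then \<omega> i else 0)
                 * mat_inv (1\<^sub>m n - \<Lambda>)"

definition sub_mat :: "real mat \<Rightarrow> nat list \<Rightarrow> nat list \<Rightarrow> real mat" where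
  "sub_mat S rs cs = mat (length rs) (length cs) (\<lambda>(a, b). S $$ (rs ! a, cs ! b))"

definition princ_sub :: "real mat \<Rightarrow> nat set \<Rightarrow> real mat" where
  "princ_sub S A = sub_mat S (sorted_list_of_set A) (sorted_list_of_set A)"

definition cond_sub :: "real mat \<Rightarrow> nat \<Rightarrow> nat \<Rightarrow> nat set \<Rightarrow> real mat" where
  "cond_sub S i j K = sub_mat S (i # sorted_list_of_set K) (j # sorted_list_of_set K)"

definition lambda_cond :: "real mat \<Rightarrow> nat \<Rightarrow> nat \<Rightarrow> nat set \<Rightarrow> real" where
  "lambda_cond S i j A = det (cond_sub S i j (A - {i})) / det (princ_sub S A)"

end

theory Submission
  imports Defs
begin

text \<open>
  All three conclusions are refuted by parameters supported on a single directed path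
  \<open>i = u\<^sub>0 \<rightarrow> j = u\<^sub>1 \<rightarrow> \<dots> \<rightarrow> u\<^sub>L\<close>, with unit weights on its edges and noise variance \<open>2\<close>
  at \<open>i\<close> and \<open>1\<close> elsewhere. Then \<open>\<Sigma>\<close> is the identity off the path, \<open>\<Sigma>(u\<^sub>s, u\<^sub>t) = min s t + 2\<close>
  on it, and \<open>\<lambda>\<^sub>i\<^sub>j = 1\<close>, so both determinants in \<open>\<lambda>\<^sub>i\<^sub>j\<^sub>|\<^sub>A\<close> reduce to minors on the path vertices.
  If \<open>j \<in> A\<close>, the numerator has a repeated column and vanishes. If \<open>i \<notin> A\<close>, the single edge
  \<open>i \<rightarrow> j\<close> gives \<open>\<lambda>\<^sub>i\<^sub>j\<^sub>|\<^sub>A = \<Sigma>(i, j) = 2\<close>. If \<open>A\<close> contains a descendant of \<open>j\<close>, take the path from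
  \<open>i\<close> through \<open>j\<close> to the first vertex \<open>u\<^sub>L\<close> of \<open>A\<close>: only \<open>2 \<times> 2\<close> minors on \<open>{i, u\<^sub>L}\<close> survive,
  and \<open>\<lambda>\<^sub>i\<^sub>j\<^sub>|\<^sub>A = (2L - 2) / 2L \<noteq> 1\<close>.
\<close>

lemma det_eq_sum_permutes_identity_outside:
  fixes M :: "'a :: comm_ring_1 mat"
  assumes M: "M \<in> carrier_mat N N" and P: "P \<subseteq> {0..<N}"
    and outside: "\<And>a b. a < N \<Longrightarrow> b < N \<Longrightarrow> \<not> (a \<in> P \<and> b \<in> P) \<Longrightarrow>
      M $$ (a, b) = (if a = b then 1 else 0)"
  shows "det M = (\<Sum>\<pi> | \<pi> permutes P. signof \<pi> * (\<Prod>a\<in>P. M $$ (a, \<pi> a)))"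
proof -
  let ?f = "\<lambda>\<pi>. signof \<pi> * (\<Prod>a=0..<N. M $$ (a, \<pi> a))"
  have vanish: "?f \<pi> = 0" if \<pi>: "\<pi> \<in> {\<pi>. \<pi> permutes {0..<N}} - {\<pi>. \<pi> permutes P}" for \<pi>
  proof -
    from \<pi> have perm: "\<pi> permutes {0..<N}" by simp
    have "\<exists>a<N. a \<notin> P \<and> \<pi> a \<noteq> a"
    proof (rule ccontr)
      assume "\<not> ?thesis"
      then have "\<pi> x = x" if "x \<notin> P" for x
        using that permutes_not_in[OF perm, of x] by (cases "x < N") auto
      then have "\<pi> permutes P" using perm by (simp add: permutes_def)
      then show False using \<pi> by simp
    qed
    then obtain a where a: "a < N" "a \<notin> P" "\<pi> a \<noteq> a" by blast
    have "M $$ (a, \<pi> a) = 0"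
      using outside[of a "\<pi> a"] a permutes_in_image[OF perm, of a] by auto
    then have "(\<Prod>a=0..<N. M $$ (a, \<pi> a)) = 0" using a(1) by (intro prod_zero) auto
    then show ?thesis by simp
  qed
  have restrict: "(\<Prod>a=0..<N. M $$ (a, \<pi> a)) = (\<Prod>a\<in>P. M $$ (a, \<pi> a))"
    if "\<pi> permutes P" for \<pi>
    using P outside permutes_not_in[OF that] by (intro prod.mono_neutral_right) auto
  have "det M = sum ?f {\<pi>. \<pi> permutes {0..<N}}" by (rule det_def'[OF M])
  also have "\<dots> = sum ?f {\<pi>. \<pi> permutes P}"
    using P vanish by (intro sum.mono_neutral_right) (auto intro: permutes_subset finite_permutations)
  also have "\<dots> = (\<Sum>\<pi> | \<pi> permutes P. signof \<pi> * (\<Prod>a\<in>P. M $$ (a, \<pi> a)))"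
    using restrict by simp
  finally show ?thesis .
qed

lemma sum_permutes_doubleton:
  fixes f :: "nat \<Rightarrow> nat \<Rightarrow> 'a :: comm_ring_1"
  assumes "p \<noteq> q"
  shows "(\<Sum>\<pi> | \<pi> permutes {p, q}. signof \<pi> * (\<Prod>a\<in>{p, q}. f a (\<pi> a)))
    = f p p * f q q - f p q * f q p"
proof -
  have "{\<pi>. \<pi> permutes {p, q}} = {id, Transposition.transpose p q}"
    by (auto simp: permutes_doubleton_iff)
  moreover have "Transposition.transpose p q \<noteq> id"
    using assms by (metis id_apply transpose_apply_first)
  ultimately show ?thesis using assms by (simp add: sign_swap_id)
qed

lemma sub_mat_identity_outside:
  assumes S: "\<And>x y. x \<in> set rs \<Longrightarrow> y \<in> set cs \<Longrightarrow> x \<notin> W \<or> y \<notin> W \<Longrightarrow>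
      S $$ (x, y) = (if x = y then 1 else 0)"
    and len: "length cs = length rs" and dist: "distinct rs" "distinct cs"
    and outside_P: "\<And>a. a < length rs \<Longrightarrow> a \<notin> P \<Longrightarrow> rs ! a = cs ! a \<and> rs ! a \<notin> W"
    and ab: "a < length rs" "b < length rs" "\<not> (a \<in> P \<and> b \<in> P)"
  shows "sub_mat S rs cs $$ (a, b) = (if a = b then 1 else 0)"
proof -
  have entry: "rs ! a \<notin> W \<or> cs ! b \<notin> W \<Longrightarrow>
      sub_mat S rs cs $$ (a, b) = (if rs ! a = cs ! b then 1 else 0)"
    using S[of "rs ! a" "cs ! b"] ab len by (simp add: sub_mat_def)
  show ?thesis
  proof (cases "a \<in> P")
    case False
    then have "rs ! a = cs ! a" "rs ! a \<notin> W" using outside_P ab(1) by blast+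
    then show ?thesis using entry ab len dist(2) by (simp add: nth_eq_iff_index_eq)
  next
    case True
    with ab have "b \<notin> P" by blast
    then have "cs ! b = rs ! b" "cs ! b \<notin> W" using outside_P ab(2) by metis+
    then show ?thesis using entry ab len dist(1) by (simp add: nth_eq_iff_index_eq)
  qed
qed

lemma det_sub_mat_identity_outside:
  assumes S: "\<And>x y. x \<in> set rs \<Longrightarrow> y \<in> set cs \<Longrightarrow> x \<notin> W \<or> y \<notin> W \<Longrightarrow>
      S $$ (x, y) = (if x = y then 1 else 0)"
    and len: "length cs = length rs" and dist: "distinct rs" "distinct cs"
    and P: "P \<subseteq> {0..<length rs}"
    and outside_P: "\<And>a. a < length rs \<Longrightarrow> a \<notin> P \<Longrightarrow> rs ! a = cs ! a \<and> rs ! a \<notin> W"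
  shows "det (sub_mat S rs cs)
    = (\<Sum>\<pi> | \<pi> permutes P. signof \<pi> * (\<Prod>a\<in>P. S $$ (rs ! a, cs ! \<pi> a)))"
proof -
  have "det (sub_mat S rs cs)
      = (\<Sum>\<pi> | \<pi> permutes P. signof \<pi> * (\<Prod>a\<in>P. sub_mat S rs cs $$ (a, \<pi> a)))"
    using len P sub_mat_identity_outside[OF S len dist outside_P]
    by (intro det_eq_sum_permutes_identity_outside) (auto simp: sub_mat_def)
  also have "\<dots> = (\<Sum>\<pi> | \<pi> permutes P. signof \<pi> * (\<Prod>a\<in>P. S $$ (rs ! a, cs ! \<pi> a)))"
  proof (intro sum.cong refl arg_cong[where f = "(*) _"] prod.cong)
    fix \<pi> a assume "\<pi> \<in> {\<pi>. \<pi> permutes P}" "a \<in> P"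
    then have "a < length rs" "\<pi> a < length rs" using P permutes_in_image[of \<pi> P a] by auto
    then show "sub_mat S rs cs $$ (a, \<pi> a) = S $$ (rs ! a, cs ! \<pi> a)"
      using len by (simp add: sub_mat_def)
  qed
  finally show ?thesis .
qed

lemma lambda_cond_target_in_set:
  assumes "finite A" "j \<in> A" "j \<noteq> i"
  shows "lambda_cond S i j A = 0"
proof -
  define ys where "ys = sorted_list_of_set (A - {i})"
  from assms have "j \<in> set ys" unfolding ys_def by auto
  then obtain q where q: "q < length ys" "ys ! q = j" by (metis in_set_conv_nth)
  define M where "M = sub_mat S (i # ys) (j # ys)"
  have M: "M \<in> carrier_mat (Suc (length ys)) (Suc (length ys))"
    unfolding M_def sub_mat_def by simp
  have "col M 0 = col M (Suc q)"
    using M q by (intro eq_vecI) (auto simp: M_def sub_mat_def)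
  then have "det M = 0" using det_identical_columns[OF M, of 0 "Suc q"] q by auto
  then show ?thesis unfolding lambda_cond_def cond_sub_def M_def ys_def by simp
qed

lemma mat_inv_eqI:
  fixes A B :: "real mat"
  assumes A: "A \<in> carrier_mat n n" and B: "B \<in> carrier_mat n n" and AB: "A * B = 1\<^sub>m n"
  shows "mat_inv A = B"
proof -
  have "det A \<noteq> 0" using det_mult[OF A B] AB by auto
  then have unit: "A \<in> Units (ring_mat TYPE(real) n ())" by (rule det_non_zero_imp_unit[OF A])
  then obtain C where C: "mat_inverse A = Some C"
    using mat_inverse(1)[OF A, where b = "()"] by (cases "mat_inverse A") auto
  from mat_inverse(2)[OF A C] have CA: "C * A = 1\<^sub>m n" and Cc: "C \<in> carrier_mat n n" by auto
  have "C = C * (A * B)" using AB Cc by simp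
  also have "\<dots> = (C * A) * B" using Cc A B by (simp add: assoc_mult_mat)
  also have "\<dots> = B" using CA B by simp
  finally show ?thesis using C unfolding mat_inv_def by simp
qed

lemma transpose_diag_congruence_entry:
  fixes X :: "real mat"
  assumes X: "X \<in> carrier_mat n n" and ab: "a < n" "b < n"
  shows "(transpose_mat X * mat n n (\<lambda>(i, j). if i = j then \<omega> i else 0) * X) $$ (a, b)
    = (\<Sum>c<n. X $$ (c, a) * \<omega> c * X $$ (c, b))"
proof -
  let ?D = "mat n n (\<lambda>(i, j). if i = j then \<omega> i else 0)"
  have XD: "(transpose_mat X * ?D) $$ (a, c) = X $$ (c, a) * \<omega> c" if "c < n" for c
  proof -
    have "(transpose_mat X * ?D) $$ (a, c) = (\<Sum>d = 0..<n. X $$ (d, a) * (if d = c then \<omega> d else 0))"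
      using X ab that by (simp add: scalar_prod_def)
    also have "\<dots> = X $$ (c, a) * \<omega> c" using that by (simp add: if_distrib cong: if_cong)
    finally show ?thesis .
  qed
  have "(transpose_mat X * ?D * X) $$ (a, b) = (\<Sum>c = 0..<n. (transpose_mat X * ?D) $$ (a, c) * X $$ (c, b))"
    using X ab by (simp add: scalar_prod_def)
  also have "\<dots> = (\<Sum>c<n. X $$ (c, a) * \<omega> c * X $$ (c, b))"
    using XD by (auto simp: lessThan_atLeast0 intro!: sum.cong)
  finally show ?thesis .
qed

lemma trancl_first_hit:
  assumes "(x, y) \<in> R\<^sup>+" "y \<in> A"
  obtains f m where "0 < m" "f 0 = x" "f m \<in> A" "\<And>t. t < m \<Longrightarrow> (f t, f (Suc t)) \<in> R"
    "\<And>t. 0 < t \<Longrightarrow> t < m \<Longrightarrow> f t \<notin> A"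
proof -
  define walk_to_A where "walk_to_A m \<longleftrightarrow>
    0 < m \<and> (\<exists>f. f 0 = x \<and> f m \<in> A \<and> (\<forall>t<m. (f t, f (Suc t)) \<in> R))" for m
  obtain m where "0 < m" "(x, y) \<in> R ^^ m" using assms(1) trancl_power by blast
  then have "walk_to_A m"
    using assms(2) relpow_fun_conv[of x y m R] unfolding walk_to_A_def by metis
  then obtain m0 where m0: "walk_to_A m0" and least: "\<And>m. m < m0 \<Longrightarrow> \<not> walk_to_A m"
    using exists_least_iff[of walk_to_A] by blast
  then obtain f where f: "0 < m0" "f 0 = x" "f m0 \<in> A" "\<And>t. t < m0 \<Longrightarrow> (f t, f (Suc t)) \<in> R"
    unfolding walk_to_A_def by blast
  have "f t \<notin> A" if "0 < t" "t < m0" for t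
    using least[of t] that f unfolding walk_to_A_def by auto
  with f that show thesis by blast
qed

definition identifying :: "nat \<Rightarrow> (nat \<times> nat) set \<Rightarrow> nat \<Rightarrow> nat \<Rightarrow> nat set \<Rightarrow> bool" where
  "identifying n E i j A \<longleftrightarrow>
    (\<forall>\<omega> \<Lambda>. is_param n E \<omega> \<Lambda> \<longrightarrow> lambda_cond (phi n \<omega> \<Lambda>) i j A = \<Lambda> $$ (i, j))"

lemma sum_atMost_two_then_ones: "(\<Sum>r\<le>m. if r = 0 then 2 else 1) = real m + 2"
  by (induction m) auto

locale dag_path =
  fixes n :: nat and E :: "(nat \<times> nat) set" and u :: "nat \<Rightarrow> nat" and L :: nat
  assumes dag: "is_dag n E" and length_pos: "0 < L"
    and edges: "\<And>t. t < L \<Longrightarrow> (u t, u (Suc t)) \<in> E"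
begin

lemma path_trancl: "s < t \<Longrightarrow> t \<le> L \<Longrightarrow> (u s, u t) \<in> E\<^sup>+"
proof (induction t)
  case (Suc t)
  then show ?case
    using edges[of t] by (cases "s = t") (auto intro: trancl_into_trancl)
qed simp

lemma inj_on_path: "inj_on u {..L}"
proof (rule inj_onI)
  fix s t assume "s \<in> {..L}" "t \<in> {..L}" "u s = u t"
  moreover have "acyclic E" using dag unfolding is_dag_def by simp
  ultimately show "s = t"
    using path_trancl[of s t] path_trancl[of t s] unfolding acyclic_def
    by (metis atMost_iff linorder_neqE_nat)
qed

lemma path_eq_iff: "s \<le> L \<Longrightarrow> t \<le> L \<Longrightarrow> u s = u t \<longleftrightarrow> s = t"
  using inj_on_path by (auto dest: inj_onD)

lemma endpoints_distinct: "u 0 \<noteq> u L"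
  using path_eq_iff[of 0 L] length_pos by simp

lemma vertex_less: "t \<le> L \<Longrightarrow> u t < n"
  using dag edges[of t] edges[of "t - 1"] length_pos unfolding is_dag_def
  by (cases "t < L") (auto simp: Suc_diff_1)

definition Lam :: "real mat" where
  "Lam = mat n n (\<lambda>(a, b). if \<exists>t<L. a = u t \<and> b = u (Suc t) then 1 else 0)"

definition reach :: "real mat" where
  "reach = mat n n (\<lambda>(a, b). if a = b \<or> (\<exists>s t. s < t \<and> t \<le> L \<and> a = u s \<and> b = u t) then 1 else 0)"

definition omega :: "nat \<Rightarrow> real" where
  "omega a = (if a = u 0 then 2 else 1)"

definition Sigma :: "real mat" where
  "Sigma = phi n omega Lam"

lemma Lam_carrier: "Lam \<in> carrier_mat n n"
  unfolding Lam_def by simp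

lemma reach_carrier: "reach \<in> carrier_mat n n"
  unfolding reach_def by simp

lemma Lam_path_row:
  assumes "s < L" "c < n"
  shows "Lam $$ (u s, c) = (if c = u (Suc s) then 1 else 0)"
proof -
  have "(\<exists>t<L. u s = u t \<and> c = u (Suc t)) \<longleftrightarrow> c = u (Suc s)"
    using assms(1) path_eq_iff[of s] by (metis less_imp_le_nat)
  then show ?thesis using assms vertex_less[of s] unfolding Lam_def by simp
qed

lemma Lam_row_outside: "a < n \<Longrightarrow> c < n \<Longrightarrow> a \<notin> u ` {..<L} \<Longrightarrow> Lam $$ (a, c) = 0"
  unfolding Lam_def by auto

lemma reach_path_col:
  assumes "c < n" "s \<le> L"
  shows "reach $$ (c, u s) = (if c \<in> u ` {..s} then 1 else 0)"
proof -
  have "c = u s \<or> (\<exists>r t. r < t \<and> t \<le> L \<and> c = u r \<and> u s = u t) \<longleftrightarrow> c \<in> u ` {..s}"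
  proof
    assume "c = u s \<or> (\<exists>r t. r < t \<and> t \<le> L \<and> c = u r \<and> u s = u t)"
    then show "c \<in> u ` {..s}" using assms(2) path_eq_iff by force
  next
    assume "c \<in> u ` {..s}"
    then obtain r where "r \<le> s" "c = u r" by auto
    then show "c = u s \<or> (\<exists>r t. r < t \<and> t \<le> L \<and> c = u r \<and> u s = u t)"
      using assms(2) le_neq_implies_less by blast
  qed
  then show ?thesis using assms vertex_less[of s] unfolding reach_def by simp
qed

lemma reach_col_outside: "c < n \<Longrightarrow> b < n \<Longrightarrow> b \<notin> u ` {..L} \<Longrightarrow>
    reach $$ (c, b) = (if c = b then 1 else 0)"
  unfolding reach_def by auto

lemma reach_row_outside: "a < n \<Longrightarrow> b < n \<Longrightarrow> a \<notin> u ` {..<L} \<Longrightarrow>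
    reach $$ (a, b) = (if a = b then 1 else 0)"
  unfolding reach_def by (auto dest: less_le_trans)

lemma one_minus_Lam_times_reach_entry:
  assumes "a < n" "b < n"
  shows "((1\<^sub>m n - Lam) * reach) $$ (a, b)
    = reach $$ (a, b) - (\<Sum>c = 0..<n. Lam $$ (a, c) * reach $$ (c, b))"
proof -
  have "((1\<^sub>m n - Lam) * reach) $$ (a, b)
      = (\<Sum>c = 0..<n. (if a = c then reach $$ (c, b) else 0) - Lam $$ (a, c) * reach $$ (c, b))"
    using assms Lam_carrier reach_carrier by (auto simp: scalar_prod_def algebra_simps intro!: sum.cong)
  then show ?thesis using assms by (simp add: sum_subtractf)
qed

lemma one_minus_Lam_times_reach: "(1\<^sub>m n - Lam) * reach = 1\<^sub>m n"
proof (rule eq_matI)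
  fix a b assume "a < dim_row (1\<^sub>m n)" "b < dim_col (1\<^sub>m n)"
  then have ab: "a < n" "b < n" by auto
  note entry = one_minus_Lam_times_reach_entry[OF ab]
  show "((1\<^sub>m n - Lam) * reach) $$ (a, b) = 1\<^sub>m n $$ (a, b)"
  proof (cases "a \<in> u ` {..<L}")
    case True
    then obtain s where s: "s < L" "a = u s" by auto
    have next_less: "u (Suc s) < n" using vertex_less s by simp
    have "(\<Sum>c = 0..<n. Lam $$ (a, c) * reach $$ (c, b))
        = (\<Sum>c = 0..<n. if c = u (Suc s) then reach $$ (c, b) else 0)"
      using s Lam_path_row by (intro sum.cong) auto
    also have "\<dots> = reach $$ (u (Suc s), b)" using next_less by simp
    finally have diff: "((1\<^sub>m n - Lam) * reach) $$ (a, b) = reach $$ (a, b) - reach $$ (u (Suc s), b)"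
      using entry by simp
    show ?thesis
    proof (cases "b \<in> u ` {..L}")
      case True
      then obtain t where t: "t \<le> L" "b = u t" by auto
      have "reach $$ (a, b) = (if s \<le> t then 1 else 0)"
        using reach_path_col[of a t] ab t s path_eq_iff[of s] by (auto intro: le_trans)
      moreover have "reach $$ (u (Suc s), b) = (if Suc s \<le> t then 1 else 0)"
        using reach_path_col[of "u (Suc s)" t] next_less t s path_eq_iff[of "Suc s"]
        by (auto intro: le_trans)
      moreover have "a = b \<longleftrightarrow> s = t" using s t path_eq_iff by simp
      ultimately show ?thesis using diff ab by auto
    next
      case False
      moreover have "a \<in> u ` {..L}" "u (Suc s) \<in> u ` {..L}" using s by auto
      ultimately have "a \<noteq> b" "u (Suc s) \<noteq> b" by auto
      with False show ?thesis using diff ab next_less reach_col_outside[of _ b] by simp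
    qed
  next
    case False
    have "(\<Sum>c = 0..<n. Lam $$ (a, c) * reach $$ (c, b)) = 0"
      using Lam_row_outside ab False by (intro sum.neutral) auto
    then show ?thesis using entry ab reach_row_outside[OF ab False] by simp
  qed
qed (use Lam_carrier reach_carrier in simp_all)

lemma Sigma_entry:
  "a < n \<Longrightarrow> b < n \<Longrightarrow> Sigma $$ (a, b) = (\<Sum>c<n. reach $$ (c, a) * omega c * reach $$ (c, b))"
proof -
  have "mat_inv (1\<^sub>m n - Lam) = reach"
    using Lam_carrier reach_carrier one_minus_Lam_times_reach by (intro mat_inv_eqI) auto
  then show "a < n \<Longrightarrow> b < n \<Longrightarrow> ?thesis"
    unfolding Sigma_def phi_def using transpose_diag_congruence_entry[OF reach_carrier] by simp
qed

text \<open>Along the path, \<open>Sigma\<close> is the covariance of a random walk started with variance \<open>2\<close>.\<close>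
lemma Sigma_path:
  assumes "s \<le> L" "t \<le> L"
  shows "Sigma $$ (u s, u t) = real (min s t) + 2"
proof -
  let ?m = "min s t"
  have common: "c \<in> u ` {..s} \<and> c \<in> u ` {..t} \<longleftrightarrow> c \<in> u ` {..?m}" for c
    using assms path_eq_iff by fastforce
  have "Sigma $$ (u s, u t) = (\<Sum>c<n. if c \<in> u ` {..?m} then omega c else 0)"
    using assms vertex_less by (auto simp: Sigma_entry reach_path_col common[symmetric] intro!: sum.cong)
  also have "\<dots> = sum omega (u ` {..?m})"
    using assms vertex_less by (simp add: sum.inter_restrict[symmetric] Int_absorb1 image_subset_iff)
  also have "\<dots> = (\<Sum>r\<le>?m. omega (u r))"
    using assms inj_on_subset[OF inj_on_path] by (simp add: sum.reindex)
  also have "\<dots> = (\<Sum>r\<le>?m. if r = 0 then 2 else 1)"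
    using assms path_eq_iff[of _ 0] by (intro sum.cong) (auto simp: omega_def)
  also have "\<dots> = real ?m + 2"
    by (rule sum_atMost_two_then_ones)
  finally show ?thesis .
qed

lemma Sigma_outside:
  assumes ab: "a < n" "b < n" and outside: "a \<notin> u ` {..L} \<or> b \<notin> u ` {..L}"
  shows "Sigma $$ (a, b) = (if a = b then 1 else 0)"
proof -
  have row: "reach $$ (x, y) = (if x = y then 1 else 0)" if "x < n" "y < n" "x \<notin> u ` {..L}" for x y
  proof -
    have "x \<notin> u ` {..<L}" using that(3) by auto
    then show ?thesis using reach_row_outside that(1,2) by simp
  qed
  have omega_outside: "omega x = 1" if "x \<notin> u ` {..L}" for x
    using that by (auto simp: omega_def)
  show ?thesis
  proof (cases "a \<in> u ` {..L}")
    case False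
    then have "Sigma $$ (a, b) = (\<Sum>c<n. if c = a then omega a * reach $$ (a, b) else 0)"
      unfolding Sigma_entry[OF ab] using ab by (intro sum.cong) (auto simp: reach_col_outside)
    then show ?thesis using ab False row omega_outside by simp
  next
    case True
    with outside have b: "b \<notin> u ` {..L}" by blast
    then have "Sigma $$ (a, b) = (\<Sum>c<n. if c = b then reach $$ (b, a) * omega b else 0)"
      unfolding Sigma_entry[OF ab] using ab by (intro sum.cong) (auto simp: reach_col_outside)
    then show ?thesis using ab b row omega_outside by auto
  qed
qed

lemma is_param: "is_param n E omega Lam"
  using edges Lam_carrier unfolding is_param_def omega_def Lam_def by auto

lemma Lam_first_edge: "Lam $$ (u 0, u 1) = 1"
  using Lam_path_row[of 0 "u 1"] length_pos vertex_less[of 1] by simp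

lemma lambda_cond_Sigma_disjoint:
  assumes A: "A \<subseteq> {0..<n}" and disjoint: "A \<inter> u ` {..L} = {}"
  shows "lambda_cond Sigma (u 0) (u 1) A = 2"
proof -
  define xs where "xs = sorted_list_of_set A"
  have xs: "distinct xs" "set xs = A"
    using A finite_subset[OF A] by (auto simp: xs_def)
  have xs_outside: "xs ! b \<notin> u ` {..L}" if "b < length xs" for b
    using that xs disjoint nth_mem[of b xs] by blast
  have ends: "u 0 \<in> u ` {..L}" "u 1 \<in> u ` {..L}" "u 0 < n" "u 1 < n"
    using length_pos vertex_less by auto
  have "det (princ_sub Sigma A)
      = (\<Sum>\<pi> | \<pi> permutes {}. signof \<pi> * (\<Prod>a\<in>{}. Sigma $$ (xs ! a, xs ! \<pi> a)))"
    unfolding princ_sub_def xs_def[symmetric]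
    using A xs disjoint nth_mem[of _ xs]
    by (intro det_sub_mat_identity_outside[where W = "u ` {..L}"] Sigma_outside) auto
  then have den: "det (princ_sub Sigma A) = 1" by simp
  have A_minus: "A - {u 0} = A" using disjoint ends by auto
  have "det (cond_sub Sigma (u 0) (u 1) (A - {u 0}))
      = (\<Sum>\<pi> | \<pi> permutes {0}. signof \<pi> * (\<Prod>a\<in>{0}. Sigma $$ ((u 0 # xs) ! a, (u 1 # xs) ! \<pi> a)))"
    unfolding cond_sub_def A_minus xs_def[symmetric]
    using A xs disjoint ends xs_outside
    by (intro det_sub_mat_identity_outside[where W = "u ` {..L}"] Sigma_outside)
      (auto simp: nth_Cons')
  also have "\<dots> = Sigma $$ (u 0, u 1)" by simp
  also have "\<dots> = 2" using Sigma_path[of 0 1] length_pos by simp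
  finally show ?thesis by (simp add: lambda_cond_def den)
qed

context
  fixes A :: "nat set"
  assumes A: "A \<subseteq> {0..<n}" and long: "1 < L" and meets: "A \<inter> u ` {..L} = {u 0, u L}"
begin

lemma second_vertex_notin: "u 1 \<notin> A"
proof
  assume "u 1 \<in> A"
  then have "u 1 \<in> {u 0, u L}" using meets long by auto
  then show False using long path_eq_iff[of 1] by auto
qed

lemma det_princ_sub_Sigma_endpoints: "det (princ_sub Sigma A) = 2 * real L"
proof -
  define xs where "xs = sorted_list_of_set A"
  have xs: "distinct xs" "set xs = A" using A finite_subset[OF A] by (auto simp: xs_def)
  have "u 0 \<in> set xs" "u L \<in> set xs" using meets xs(2) by auto
  then obtain p q where p: "p < length xs" "xs ! p = u 0" and q: "q < length xs" "xs ! q = u L"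
    by (metis in_set_conv_nth)
  have xs_outside: "xs ! a \<notin> u ` {..L}" if "a < length xs" "a \<notin> {p, q}" for a
  proof -
    have "xs ! a \<in> A" "xs ! a \<noteq> xs ! p" "xs ! a \<noteq> xs ! q"
      using that p(1) q(1) xs nth_eq_iff_index_eq[OF xs(1)] by auto
    then show ?thesis using meets p q by auto
  qed
  have "det (princ_sub Sigma A)
      = (\<Sum>\<pi> | \<pi> permutes {p, q}. signof \<pi> * (\<Prod>a\<in>{p, q}. Sigma $$ (xs ! a, xs ! \<pi> a)))"
    unfolding princ_sub_def xs_def[symmetric]
    using A xs p q xs_outside
    by (intro det_sub_mat_identity_outside[where W = "u ` {..L}"] Sigma_outside) auto
  also have "\<dots> = Sigma $$ (u 0, u 0) * Sigma $$ (u L, u L) - Sigma $$ (u 0, u L) * Sigma $$ (u L, u 0)"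
    using sum_permutes_doubleton[of p q "\<lambda>a b. Sigma $$ (xs ! a, xs ! b)"] p q endpoints_distinct
    by fastforce
  also have "\<dots> = 2 * real L"
    using Sigma_path[of 0 0] Sigma_path[of L L] Sigma_path[of 0 L] Sigma_path[of L 0] by simp
  finally show ?thesis .
qed

lemma det_cond_sub_Sigma_endpoints: "det (cond_sub Sigma (u 0) (u 1) (A - {u 0})) = 2 * real L - 2"
proof -
  define ys where "ys = sorted_list_of_set (A - {u 0})"
  have ys: "distinct ys" "set ys = A - {u 0}" using finite_subset[OF A] by (auto simp: ys_def)
  have "u L \<in> set ys" using meets endpoints_distinct ys(2) by auto
  then obtain r where r: "r < length ys" "ys ! r = u L" by (metis in_set_conv_nth)
  have ys_outside: "ys ! b \<notin> u ` {..L}" if "b < length ys" "b \<noteq> r" for b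
  proof -
    have "ys ! b \<in> A - {u 0}" "ys ! b \<noteq> ys ! r"
      using that r(1) ys nth_mem[OF that(1)] nth_eq_iff_index_eq[OF ys(1)] by auto
    then show ?thesis using meets r by auto
  qed
  have cons_outside: "(u 0 # ys) ! a = (u 1 # ys) ! a \<and> (u 0 # ys) ! a \<notin> u ` {..L}"
    if a: "a < length (u 0 # ys)" "a \<notin> {0, Suc r}" for a
  proof -
    obtain b where "a = Suc b" "b < length ys" "b \<noteq> r" using a by (cases a) auto
    then show ?thesis using ys_outside by simp
  qed
  have "det (cond_sub Sigma (u 0) (u 1) (A - {u 0}))
      = (\<Sum>\<pi> | \<pi> permutes {0, Suc r}.
          signof \<pi> * (\<Prod>a\<in>{0, Suc r}. Sigma $$ ((u 0 # ys) ! a, (u 1 # ys) ! \<pi> a)))"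
    unfolding cond_sub_def ys_def[symmetric]
    using A ys r cons_outside second_vertex_notin vertex_less[of 0] vertex_less[of 1] long
    by (intro det_sub_mat_identity_outside[where W = "u ` {..L}"] Sigma_outside) auto
  also have "\<dots> = Sigma $$ (u 0, u 1) * Sigma $$ (u L, u L) - Sigma $$ (u 0, u L) * Sigma $$ (u L, u 1)"
    using sum_permutes_doubleton[of 0 "Suc r" "\<lambda>a b. Sigma $$ ((u 0 # ys) ! a, (u 1 # ys) ! b)"] r
    by simp
  also have "\<dots> = 2 * real L - 2"
    using Sigma_path[of 0 1] Sigma_path[of L L] Sigma_path[of 0 L] Sigma_path[of L 1] long by simp
  finally show ?thesis .
qed

lemma lambda_cond_Sigma_endpoints: "lambda_cond Sigma (u 0) (u 1) A = (real L - 1) / real L"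
  unfolding lambda_cond_def det_princ_sub_Sigma_endpoints det_cond_sub_Sigma_endpoints
  using long by (simp add: field_simps)

end

lemma lambda_cond_Sigma_if_identifying:
  assumes "identifying n E (u 0) (u 1) A"
  shows "lambda_cond Sigma (u 0) (u 1) A = 1"
  using assms is_param Lam_first_edge unfolding identifying_def Sigma_def by simp

end

definition edge_walk :: "nat \<Rightarrow> nat \<Rightarrow> nat \<Rightarrow> nat" where
  "edge_walk i j t = (if t = 0 then i else j)"

lemma edge_walk_simps [simp]: "edge_walk i j 0 = i" "edge_walk i j (Suc 0) = j"
  by (simp_all add: edge_walk_def)

lemma edge_walk_image: "edge_walk i j ` {..Suc 0} = {i, j}"
  by (auto simp: edge_walk_def le_Suc_eq image_iff)

lemma dag_path_edge_walk:
  assumes "is_dag n E" "(i, j) \<in> E"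
  shows "dag_path n E (edge_walk i j) 1"
  using assms by unfold_locales auto

context
  fixes n :: nat and E :: "(nat \<times> nat) set" and i j :: nat and A :: "nat set"
  assumes dag: "is_dag n E" and edge: "(i, j) \<in> E" and A: "A \<subseteq> {0..<n}"
    and identifying: "identifying n E i j A"
begin

interpretation edge_path: dag_path n E "edge_walk i j" 1
  by (rule dag_path_edge_walk[OF dag edge])

lemma identifying_lambda_edge: "lambda_cond edge_path.Sigma i j A = 1"
  using edge_path.lambda_cond_Sigma_if_identifying identifying by simp

lemma identifying_target_notin: "j \<notin> A"
proof
  assume "j \<in> A"
  moreover have "i \<noteq> j" using dag edge unfolding is_dag_def acyclic_def by auto
  ultimately have "lambda_cond edge_path.Sigma i j A = 0"
    using finite_subset[OF A] by (intro lambda_cond_target_in_set) auto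
  then show False using identifying_lambda_edge by simp
qed

lemma identifying_source_in: "i \<in> A"
proof (rule ccontr)
  assume "i \<notin> A"
  then have "A \<inter> edge_walk i j ` {..1} = {}"
    using identifying_target_notin by (simp add: edge_walk_image)
  then have "lambda_cond edge_path.Sigma i j A = 2"
    using edge_path.lambda_cond_Sigma_disjoint[OF A] by simp
  then show False using identifying_lambda_edge by simp
qed

lemma identifying_no_descendant: "A \<inter> de E j = {}"
proof -
  have False if k: "k \<in> A" "(j, k) \<in> E\<^sup>+" for k
  proof -
    obtain f m where m: "0 < m" and f: "f 0 = j" "f m \<in> A" "\<And>t. t < m \<Longrightarrow> (f t, f (Suc t)) \<in> E"
      and first: "\<And>t. 0 < t \<Longrightarrow> t < m \<Longrightarrow> f t \<notin> A"
      using trancl_first_hit[OF k(2,1)] by blast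
    define u where "u t = (if t = 0 then i else f (t - 1))" for t
    interpret dag_path n E u "Suc m"
      using dag edge f(1,3) by unfold_locales (auto simp: u_def less_Suc_eq_0_disj)
    have on_A: "u t \<in> A \<longleftrightarrow> t = 0 \<or> t = Suc m" if "t \<le> Suc m" for t
    proof (cases t)
      case 0
      then show ?thesis using identifying_source_in by (simp add: u_def)
    next
      case (Suc s)
      then show ?thesis
        using that m f(1,2) first[of s] identifying_target_notin
        by (cases "s = 0"; cases "s = m") (auto simp: u_def)
    qed
    have "A \<inter> u ` {..Suc m} = {u 0, u (Suc m)}"
      using on_A on_A[of 0] on_A[of "Suc m"] by fastforce
    moreover have u_ends: "u 0 = i" "u 1 = j" using f(1) by (simp_all add: u_def)
    ultimately have "lambda_cond Sigma i j A = (real (Suc m) - 1) / real (Suc m)"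
      using lambda_cond_Sigma_endpoints[OF A] m by simp
    moreover have "lambda_cond Sigma i j A = 1"
      using lambda_cond_Sigma_if_identifying identifying u_ends by simp
    ultimately show False by simp
  qed
  then show ?thesis unfolding de_def by blast
qed

end

theorem mainTheorem2:
  fixes n :: nat and E :: "(nat \<times> nat) set" and i j :: nat and A :: "nat set"
  assumes "is_dag n E"
    and "(i, j) \<in> E"
    and "A \<subseteq> {0..<n}"
    and "\<forall>\<omega> \<Lambda>. is_param n E \<omega> \<Lambda> \<longrightarrow> lambda_cond (phi n \<omega> \<Lambda>) i j A = \<Lambda> $$ (i, j)"
  shows "i \<in> A \<and> A \<subseteq> {0..<n} - de_bar E j"
proof -
  have "identifying n E i j A" using assms(4) unfolding identifying_def .
  with assms(1-3) have "i \<in> A" "j \<notin> A" "A \<inter> de E j = {}"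
    by (rule identifying_source_in identifying_target_notin identifying_no_descendant)+
  with assms(3) show ?thesis unfolding de_bar_def by blast
qed

end
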